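(* (i) On the set $\{a,b\}$ (with $a\neq b$), the multioperation $*$ given by $a*a=\{a\}$, $a*b=\{a,b\}$, $b*a=\{a,b\}$, $b*b=\{a,b\}$ defines a multisemigroup. (ii) This multisemigroup $(\{a,b\},* )$ is not of the form $(\{a,b\},\Phi_{1,\omega}\circ\mu)$ for any finitary multisemigroup with multiplicities $(\{a,b\},\mu)$; that is, there is no finitary multisemigroup with multiplicities $(\{a,b\},\mu)$ such that, for all $x,y,z\in\{a,b\}$, $z\in x*y$ if and only if $\mu_{x,y}(z)\neq0$.
   Context: A multisemigroup is a set $S$ with a map $*:S\times S\to 2^S$ such that $\bigcup_{s\in a*b}s*c=\bigcup_{t\in b*c}a*t$ for all $a,b,c\in S$. $\mathrm{Card}_{\omega}$ is the set of cardinals $\le\omega$ (the first infinite cardinal) with cardinal addition and multiplication truncated at $\omega$; $\Phi_{1,\omega}:\mathrm{Card}_\omega\to\{0,1\}$ sends $0$ to $0$ and every nonzero cardinal to $1$, and subsets of $S$ are identified with functions $S\to\{0,1\}$. A finitary multisemigroup with multiplicities on a non-empty set $S$ is a map $\mu:S\times S\to\{\text{functions }S\to\mathrm{Card}_\omega\}$, $(s,t)\mapsto\mu_{s,t}$, such that all values $\mu_{r,s}(t)$ are finite, $\{t:\mu_{r,s}(t)\neq0\}$ is finite for all $r,s$, and for all $r,s,t\in S$: $\sum_{i\in S}\mu_{s,t}(i)\mu_{r,i}=\sum_{j\in S}\mu_{r,s}(j)\mu_{j,t}$ as functions on $S$ (where $\lambda\nu$ denotes the pointwise sum of $\lambda$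 copies of $\nu$). *)

theory Defs
  imports Main
begin

definition multisemigroup :: "'a set \<Rightarrow> ('a \<Rightarrow> 'a \<Rightarrow> 'a set) \<Rightarrow> bool" where
  "multisemigroup S m \<longleftrightarrow>
     (\<forall>x\<in>S. \<forall>y\<in>S. m x y \<subseteq> S) \<and>
     (\<forall>x\<in>S. \<forall>y\<in>S. \<forall>z\<in>S. (\<Union>s\<in>m x y. m s z) = (\<Union>t\<in>m y z. m x t))"

text \<open>Since all values are required
  to be finite cardinals, multiplicities are natural numbers; mu r s t is the value of
  mu_{r,s} at t.\<close>
definition finitary_msm_mult :: "'a set \<Rightarrow> ('a \<Rightarrow> 'a \<Rightarrow> 'a \<Rightarrow> nat) \<Rightarrow> bool" where
  "finitary_msm_mult S mu \<longleftrightarrow>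
     S \<noteq> {} \<and>
     (\<forall>r\<in>S. \<forall>s\<in>S. finite {t\<in>S. mu r s t \<noteq> 0}) \<and>
     (\<forall>r\<in>S. \<forall>s\<in>S. \<forall>t\<in>S. \<forall>u\<in>S.
        (\<Sum>i\<in>{i\<in>S. mu s t i \<noteq> 0}. mu s t i * mu r i u) =
        (\<Sum>j\<in>{j\<in>S. mu r s j \<noteq> 0}. mu r s j * mu j t u))"

end

theory Submission
  imports Defs
begin

text \<open>Associativity of the underlying multisemigroup holds, but with multiplicities it fails
  already for the coefficient of \<open>a\<close> in \<open>a(ab) = (aa)b\<close>: writing \<open>\<mu>\<^sub>x\<^sub>y(z)\<close> for multiplicities,
  the left side is \<open>\<mu>\<^sub>a\<^sub>b(a)\<mu>\<^sub>a\<^sub>a(a) + \<mu>\<^sub>a\<^sub>b(b)\<mu>\<^sub>a\<^sub>b(a)\<close> and the right side only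
  \<open>\<mu>\<^sub>a\<^sub>a(a)\<mu>\<^sub>a\<^sub>b(a)\<close>, so \<open>\<mu>\<^sub>a\<^sub>b(a)\<mu>\<^sub>a\<^sub>b(b) = 0\<close>, although \<open>a * b = {a, b}\<close>.\<close>

lemma finitary_msm_mult_assoc_finite:
  assumes "finitary_msm_mult S mu" and "finite S"
    and "r \<in> S" "s \<in> S" "t \<in> S" "u \<in> S"
  shows "(\<Sum>i\<in>S. mu s t i * mu r i u) = (\<Sum>j\<in>S. mu r s j * mu j t u)"
proof -
  have "(\<Sum>i\<in>S. mu s t i * mu r i u) = (\<Sum>i\<in>{i\<in>S. mu s t i \<noteq> 0}. mu s t i * mu r i u)"
    using \<open>finite S\<close> by (intro sum.mono_neutral_right) auto
  also have "\<dots> = (\<Sum>j\<in>{j\<in>S. mu r s j \<noteq> 0}. mu r s j * mu j t u)"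
    using assms unfolding finitary_msm_mult_def by blast
  also have "\<dots> = (\<Sum>j\<in>S. mu r s j * mu j t u)"
    using \<open>finite S\<close> by (intro sum.mono_neutral_left) auto
  finally show ?thesis .
qed

lemma multisemigroup_two_point:
  assumes "a \<noteq> b"
  shows "multisemigroup {a, b} (\<lambda>x y. if x = a \<and> y = a then {a} else {a, b})"
  unfolding multisemigroup_def using assms by auto

lemma two_point_not_support_of_multiplicities:
  assumes "a \<noteq> b" and mu: "finitary_msm_mult {a, b} mu"
    and support: "\<forall>x\<in>{a, b}. \<forall>y\<in>{a, b}. \<forall>z\<in>{a, b}.
      z \<in> (if x = a \<and> y = a then {a} else {a, b}) \<longleftrightarrow> mu x y z \<noteq> 0"
  shows False
proof -
  have aaa: "mu a a a \<noteq> 0" and aab: "mu a a b = 0"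
    and aba: "mu a b a \<noteq> 0" and abb: "mu a b b \<noteq> 0"
    using support \<open>a \<noteq> b\<close> by auto
  have "(\<Sum>i\<in>{a, b}. mu a b i * mu a i a) = (\<Sum>j\<in>{a, b}. mu a a j * mu j b a)"
    using finitary_msm_mult_assoc_finite [OF mu] by simp
  then have "mu a b a * mu a a a + mu a b b * mu a b a = mu a a a * mu a b a"
    using \<open>a \<noteq> b\<close> aab by simp
  then have "mu a b b * mu a b a = 0"
    by simp
  with aba abb show False
    by simp
qed

theorem proposition12:
  fixes a b :: 'a
  assumes "a \<noteq> b"
  shows "multisemigroup {a, b} (\<lambda>x y. if x = a \<and> y = a then {a} else {a, b})
    \<and> \<not> (\<exists>mu. finitary_msm_mult {a, b} mu \<and>
          (\<forall>x\<in>{a, b}. \<forall>y\<in>{a, b}. \<forall>z\<in>{a, b}.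
             z \<in> (if x = a \<and> y = a then {a} else {a, b}) \<longleftrightarrow> mu x y z \<noteq> 0))"
  using multisemigroup_two_point [OF assms] two_point_not_support_of_multiplicities [OF assms]
  by blast

end
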